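(* Let $N,T$ be positive integers and let $\mathbf{x}_0=(0,2,4,\dots,2(N-1))$. Let $\mathbf{y}=(y_1,\dots,y_N)\in\mathbb{Z}^N$ with $y_1<y_2<\dots<y_N$, $y_i\equiv T \pmod 2$ for all $i$. Put $L_i=\frac{T+2(i-1)-y_i}{2}$ for $1\le i\le N$, and assume $T\ge L_1$ and $L_N\ge 0$ (so that $\mathbf{L}=(L_1,\dots,L_N)$ is a partition, $L_1\ge L_2\ge\dots\ge L_N\ge 0$, with all parts at most $T$). Let $\boldsymbol{\lambda}=(\lambda_1,\dots,\lambda_T)$ be the conjugate partition of $\mathbf{L}$, i.e. $\lambda_k=\#\{j: L_j\ge k\}$ for $1\le k\le T$. Then $$M_{N,T}(\mathbf{y})=\lim_{q\to1}s_{\lambda}(1,q,q^2,\dots,q^{T-1})=\lim_{q\to1}q^{\sum_{k=1}^{T}(k-1)\lambda_k}\prod_{1\le i<j\le T}\frac{q^{\lambda_i-\lambda_j+j-i}-1}{q^{j-i}-1}=\prod_{1\le i<j\le T}\frac{\lambda_i-\lambda_j+j-i}{j-i}.$$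
   Context: $M_{N,T}(\mathbf{y})$ denotes the number of $N$-tuples $(S_1,\dots,S_N)$ of simple random walk paths on $\mathbb{Z}$ (each $S_i:\{0,1,\dots,T\}\to\mathbb{Z}$ with $|S_i(t)-S_i(t-1)|=1$) such that $S_i(0)=2(i-1)$, $S_i(T)=y_i$, and $S_1(t)<S_2(t)<\dots<S_N(t)$ for all $t=0,1,\dots,T$ (vicious walks). For a partition $\boldsymbol\lambda$ with at most $T$ parts, the Schur function is $s_\lambda(z_1,\dots,z_T)=\sum_{\mathcal{T}}\prod_{k=1}^T z_k^{\#\{\text{entries of }\mathcal T\text{ equal to }k\}}$, the sum over all semistandard Young tableaux $\mathcal T$ of shape $\boldsymbol\lambda$ with entries in $\{1,\dots,T\}$ (entries weakly increasing along rows, strictly increasing down columns). *)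

theory Defs
  imports Complex_Main
begin

text \<open>A tuple (S_1,...,S_N) of paths S_i : {0..T} -> Z is encoded as
  S :: nat => nat => int, with S i t the position of walker i (1 <= i <= N) at time t (t <= T);
  values outside this range are fixed to 0 so that the set of tuples is finite.\<close>

definition vicious_walks :: "nat \<Rightarrow> nat \<Rightarrow> (nat \<Rightarrow> int) \<Rightarrow> (nat \<Rightarrow> nat \<Rightarrow> int) set" where
  "vicious_walks N T y = {S.
     (\<forall>i t. \<not> (1 \<le> i \<and> i \<le> N \<and> t \<le> T) \<longrightarrow> S i t = 0) \<and>
     (\<forall>i\<in>{1..N}. \<forall>t\<in>{1..T}. \<bar>S i t - S i (t - 1)\<bar> = 1) \<and>
     (\<forall>i\<in>{1..N}. S i 0 = 2 * (int i - 1)) \<and>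
     (\<forall>i\<in>{1..N}. S i T = y i) \<and>
     (\<forall>t\<in>{0..T}. \<forall>i\<in>{1..<N}. S i t < S (i + 1) t)}"

definition M_count :: "nat \<Rightarrow> nat \<Rightarrow> (nat \<Rightarrow> int) \<Rightarrow> nat" where
  "M_count N T y = card (vicious_walks N T y)"

text \<open>A partition with at most T parts is given by lam :: nat => nat, with parts lam 1, ..., lam T.\<close>

definition young_cells :: "nat \<Rightarrow> (nat \<Rightarrow> nat) \<Rightarrow> (nat \<times> nat) set" where
  "young_cells T lam = {(r, c). 1 \<le> r \<and> r \<le> T \<and> 1 \<le> c \<and> c \<le> lam r}"

definition ssyt :: "nat \<Rightarrow> (nat \<Rightarrow> nat) \<Rightarrow> (nat \<Rightarrow> nat \<Rightarrow> nat) set" where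
  "ssyt T lam = {tab.
     (\<forall>r c. (r, c) \<notin> young_cells T lam \<longrightarrow> tab r c = 0) \<and>
     (\<forall>(r, c) \<in> young_cells T lam. 1 \<le> tab r c \<and> tab r c \<le> T) \<and>
     (\<forall>(r, c) \<in> young_cells T lam. (r, c + 1) \<in> young_cells T lam \<longrightarrow> tab r c \<le> tab r (c + 1)) \<and>
     (\<forall>(r, c) \<in> young_cells T lam. (r + 1, c) \<in> young_cells T lam \<longrightarrow> tab r c < tab (r + 1) c)}"

definition schur :: "nat \<Rightarrow> (nat \<Rightarrow> nat) \<Rightarrow> (nat \<Rightarrow> real) \<Rightarrow> real" where
  "schur T lam z = (\<Sum>tab\<in>ssyt T lam.
      \<Prod>k\<in>{1..T}. z k ^ card {rc \<in> young_cells T lam. tab (fst rc) (snd rc) = k})"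

end

theory Submission
  imports Defs "Jordan_Normal_Form.Determinant"
begin

text \<open>
  Recording for every walker c the number f c t of its down-steps up to time t turns a family of
  vicious walks into a family of counters that grow by 0 or 1 per step, with f c T = L_c and
  f (c + 1) \<le> f c. The times at which f c first reaches 1, 2, \<dots>, L_c form column c of a
  semistandard tableau of the conjugate shape \<lambda> with entries at most T, and conversely.
  Hence M_{N,T}(y) = s_\<lambda>(1, \<dots>, 1), the value at q = 1 of the principal specialisation, while the
  q-product tends factor by factor to the Weyl product \<Prod>_i<j (\<lambda>_i - \<lambda>_j + j - i) / (j - i).

  That the number of tableaux equals the Weyl product is proved by induction on T. Removing the
  entries T leaves a tableau whose shape \<mu> interlaces \<lambda>, so the count obeys the branching rule.
  In the increasing coordinates x_k = k - \<lambda>_(k+1) the Weyl product is the Vandermonde-type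
  determinant det (x_i choose j), and summing it over the interlacing \<mu> telescopes row by row,
  because \<Sum>_a\<le>m<b (m choose j) = (b choose j+1) - (a choose j+1). So the Weyl product obeys the
  same branching rule.
\<close>

section \<open>Vandermonde determinants of binomial coefficients\<close>

definition vandermonde_prod :: "nat \<Rightarrow> (nat \<Rightarrow> 'a::comm_ring_1) \<Rightarrow> 'a" where
  "vandermonde_prod n x = (\<Prod>i<n. \<Prod>j\<in>{Suc i..<n}. x j - x i)"

definition superfact :: "nat \<Rightarrow> 'a::{comm_semiring_1, semiring_char_0}" where
  "superfact n = (\<Prod>j<n. fact j)"

definition binomial_mat :: "nat \<Rightarrow> (nat \<Rightarrow> 'a::field_char_0) \<Rightarrow> 'a mat" where
  "binomial_mat n x = mat n n (\<lambda>(i, j). x i gchoose j)"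

lemma binomial_mat_dims [simp]:
  "dim_row (binomial_mat n x) = n" "dim_col (binomial_mat n x) = n"
  by (simp_all add: binomial_mat_def)

lemma binomial_mat_carrier [simp]: "binomial_mat n x \<in> carrier_mat n n"
  by (simp add: binomial_mat_def)

lemma binomial_mat_cong: "(\<And>i. i < n \<Longrightarrow> x i = x' i) \<Longrightarrow> binomial_mat n x = binomial_mat n x'"
  by (rule eq_matI) (auto simp: binomial_mat_def)

lemma sum_mult_delta:
  fixes f :: "'b \<Rightarrow> 'a::semiring_0"
  assumes "finite A"
  shows "(\<Sum>k\<in>A. f k * (if k = a then g k else 0)) = (if a \<in> A then f a * g a else 0)"
proof -
  have "(\<Sum>k\<in>A. f k * (if k = a then g k else 0)) = (\<Sum>k\<in>A. if k = a then f k * g k else 0)"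
    by (rule sum.cong) auto
  then show ?thesis
    using assms by simp
qed

lemma sum_delta_mult:
  fixes f :: "'b \<Rightarrow> 'a::semiring_0"
  assumes "finite A"
  shows "(\<Sum>k\<in>A. (if k = a then g k else 0) * f k) = (if a \<in> A then g a * f a else 0)"
proof -
  have "(\<Sum>k\<in>A. (if k = a then g k else 0) * f k) = (\<Sum>k\<in>A. if k = a then g k * f k else 0)"
    by (rule sum.cong) auto
  then show ?thesis
    using assms by simp
qed

lemma gbinomial_Suc_eq:
  fixes a :: "'a::field_char_0"
  shows "a gchoose Suc k = (a gchoose k) * (a - of_nat k) / of_nat (Suc k)"
  using gbinomial_mult_1[of a k] by (simp add: field_simps del: of_nat_Suc)

lemma det_mat_scale_rows_cols:
  fixes B :: "'a::comm_ring_1 mat"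
  assumes B: "B \<in> carrier_mat n n"
  shows "det (mat n n (\<lambda>(i, j). r i * c j * B $$ (i, j))) = (\<Prod>i<n. r i) * (\<Prod>j<n. c j) * det B"
proof -
  have "det (mat n n (\<lambda>(i, j). r i * c j * B $$ (i, j))) =
     (\<Sum>p\<in>{p. p permutes {0..<n}}. signof p * (\<Prod>i = 0..<n. r i * c (p i) * B $$ (i, p i)))"
    by (rule trans[OF det_def'[of _ n]], simp, rule sum.cong)
      (auto intro!: prod.cong simp: permutes_def)
  also have "\<dots> = (\<Sum>p\<in>{p. p permutes {0..<n}}.
      (\<Prod>i<n. r i) * (\<Prod>j<n. c j) * (signof p * (\<Prod>i = 0..<n. B $$ (i, p i))))"
  proof (rule sum.cong[OF refl])
    fix p assume "p \<in> {p. p permutes {0..<n}}"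
    then have "(\<Prod>i = 0..<n. c (p i)) = (\<Prod>j = 0..<n. c j)"
      using prod.permute[of p "{0..<n}" c] by (simp add: comp_def)
    then show "signof p * (\<Prod>i = 0..<n. r i * c (p i) * B $$ (i, p i)) =
        (\<Prod>i<n. r i) * (\<Prod>j<n. c j) * (signof p * (\<Prod>i = 0..<n. B $$ (i, p i)))"
      by (simp add: prod.distrib atLeast0LessThan)
  qed
  also have "\<dots> = (\<Prod>i<n. r i) * (\<Prod>j<n. c j) * det B"
    by (simp add: det_def'[OF B] sum_distrib_left)
  finally show ?thesis .
qed

lemma det_unit_first_row:
  fixes C :: "'a::comm_ring_1 mat"
  assumes C: "C \<in> carrier_mat (Suc n) (Suc n)"
    and row: "\<And>j. j < Suc n \<Longrightarrow> C $$ (0, j) = (if j = 0 then 1 else 0)"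
  shows "det C = det (mat_delete C 0 0)"
proof -
  have "det C = (\<Sum>j<Suc n. C $$ (0, j) * cofactor C 0 j)"
    by (rule laplace_expansion_row[OF C]) simp
  then show ?thesis
    using row by (subst (asm) sum.lessThan_Suc_shift) (simp add: cofactor_def)
qed

lemma det_unit_first_col:
  fixes C :: "'a::comm_ring_1 mat"
  assumes C: "C \<in> carrier_mat (Suc n) (Suc n)"
    and col: "\<And>i. i < Suc n \<Longrightarrow> C $$ (i, 0) = (if i = 0 then 1 else 0)"
  shows "det C = det (mat_delete C 0 0)"
proof -
  have "det C = (\<Sum>i<Suc n. C $$ (i, 0) * cofactor C i 0)"
    by (rule laplace_expansion_column[OF C]) simp
  then show ?thesis
    using col by (subst (asm) sum.lessThan_Suc_shift) (simp add: cofactor_def)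
qed

lemma vandermonde_prod_Suc:
  "vandermonde_prod (Suc n) x = (\<Prod>i<n. x (Suc i) - x 0) * vandermonde_prod n (x \<circ> Suc)"
proof -
  have "vandermonde_prod (Suc n) x = (\<Prod>j\<in>{Suc 0..<Suc n}. x j - x 0) *
      (\<Prod>i<n. \<Prod>j\<in>{Suc (Suc i)..<Suc n}. x j - x (Suc i))"
    unfolding vandermonde_prod_def by (rule prod.lessThan_Suc_shift)
  then show ?thesis
    by (simp only: vandermonde_prod_def prod.shift_bounds_Suc_ivl atLeast0LessThan comp_def)
qed

lemma binomial_mat_column_reduction:
  fixes x :: "nat \<Rightarrow> 'a::field_char_0"
  obtains U where "U \<in> carrier_mat (Suc n) (Suc n)" "det U = 1"
    "binomial_mat (Suc n) x * U = mat (Suc n) (Suc n) (\<lambda>(i, j).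
       if j = 0 then 1 else (x i gchoose (j - 1)) * (x i - x 0) / of_nat j)"
proof
  \<comment> \<open>adding a multiple of column \<open>j - 1\<close> to column \<open>j\<close> extracts the factor \<open>x i - x 0\<close> from row \<open>i\<close>\<close>
  define U :: "'a mat" where "U = mat (Suc n) (Suc n) (\<lambda>(i, j).
    (if i = j then 1 else 0) + (if Suc i = j then - (x 0 - of_nat i) / of_nat j else 0))"
  show U: "U \<in> carrier_mat (Suc n) (Suc n)"
    by (simp add: U_def)
  have "det U = prod_list (diag_mat U)"
    by (rule det_upper_triangular[OF _ U]) (auto simp: U_def intro!: upper_triangularI)
  then show "det U = 1"
    by (simp add: prod_list_diag_prod U_def)
  show "binomial_mat (Suc n) x * U = mat (Suc n) (Suc n) (\<lambda>(i, j).
      if j = 0 then 1 else (x i gchoose (j - 1)) * (x i - x 0) / of_nat j)"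
  proof (rule eq_matI)
    fix i j assume "i < dim_row (mat (Suc n) (Suc n) (\<lambda>(i, j).
      if j = 0 then 1 else (x i gchoose (j - 1)) * (x i - x 0) / of_nat j :: 'a))"
      and "j < dim_col (mat (Suc n) (Suc n) (\<lambda>(i, j).
      if j = 0 then 1 else (x i gchoose (j - 1)) * (x i - x 0) / of_nat j :: 'a))"
    then have i: "i < Suc n" and j: "j < Suc n"
      by simp_all
    have "(binomial_mat (Suc n) x * U) $$ (i, j) = (\<Sum>k<Suc n. (x i gchoose k) *
        ((if k = j then 1 else 0) + (if Suc k = j then - (x 0 - of_nat k) / of_nat j else 0)))"
      using i j by (simp add: U_def binomial_mat_def scalar_prod_def atLeast0LessThan)
    also have "\<dots> = (if j = 0 then 1 else (x i gchoose (j - 1)) * (x i - x 0) / of_nat j)"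
    proof (cases j)
      case (Suc k)
      have "(x i gchoose j) + (x i gchoose k) * (of_nat k - x 0) / of_nat j
          = (x i gchoose k) * (x i - x 0) / of_nat j"
        unfolding Suc gbinomial_Suc_eq by (simp add: field_simps del: of_nat_Suc)
      then show ?thesis
        using i j Suc
        by (simp add: distrib_left sum.distrib sum_mult_delta del: of_nat_Suc sum.lessThan_Suc)
    qed (use i in \<open>simp add: distrib_left sum.distrib sum_mult_delta\<close>)
    finally show "(binomial_mat (Suc n) x * U) $$ (i, j) = mat (Suc n) (Suc n) (\<lambda>(i, j).
        if j = 0 then 1 else (x i gchoose (j - 1)) * (x i - x 0) / of_nat j) $$ (i, j)"
      using i j by simp
  qed (simp_all add: U_def)
qed

lemma det_binomial_mat_Suc:
  fixes x :: "nat \<Rightarrow> 'a::field_char_0"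
  shows "det (binomial_mat (Suc n) x) =
    (\<Prod>i<n. x (Suc i) - x 0) / fact n * det (binomial_mat n (x \<circ> Suc))"
proof -
  define C :: "'a mat" where "C = mat (Suc n) (Suc n) (\<lambda>(i, j).
    if j = 0 then 1 else (x i gchoose (j - 1)) * (x i - x 0) / of_nat j)"
  obtain U where U: "U \<in> carrier_mat (Suc n) (Suc n)" "det U = 1"
    and reduce: "binomial_mat (Suc n) x * U = C"
    unfolding C_def by (rule binomial_mat_column_reduction)
  have "det (binomial_mat (Suc n) x) = det C"
    using det_mult[OF binomial_mat_carrier[of "Suc n" x] U(1)] U(2) reduce by simp
  also have "det C = det (mat_delete C 0 0)"
    by (rule det_unit_first_row[of _ n]) (simp_all add: C_def)
  also have "mat_delete C 0 0 = mat n n (\<lambda>(i, j).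
      (x (Suc i) - x 0) * (1 / of_nat (Suc j)) * binomial_mat n (x \<circ> Suc) $$ (i, j))"
    by (rule eq_matI) (auto simp: mat_delete_def C_def binomial_mat_def)
  also have "det \<dots> = (\<Prod>i<n. x (Suc i) - x 0) * (\<Prod>j<n. 1 / of_nat (Suc j)) *
      det (binomial_mat n (x \<circ> Suc))"
    by (rule det_mat_scale_rows_cols) simp
  also have "(\<Prod>j<n. 1 / of_nat (Suc j) :: 'a) = 1 / fact n"
    by (simp add: fact_prod_Suc prod_dividef atLeast0LessThan)
  finally show ?thesis
    by (simp add: comp_def)
qed

lemma det_binomial_mat: "det (binomial_mat n x) = vandermonde_prod n x / superfact n"
proof (induction n arbitrary: x)
  case 0
  then show ?case by (simp add: vandermonde_prod_def superfact_def binomial_mat_def)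
next
  case (Suc n)
  show ?case
    unfolding det_binomial_mat_Suc Suc.IH vandermonde_prod_Suc by (simp add: superfact_def)
qed

lemma det_binomial_mat_of_nat: "det (binomial_mat n (of_nat :: nat \<Rightarrow> 'a::field_char_0)) = 1"
proof -
  have "det (binomial_mat n (of_nat :: nat \<Rightarrow> 'a)) = prod_list (diag_mat (binomial_mat n of_nat))"
    by (rule det_lower_triangular[of n]) (auto simp: binomial_mat_def binomial_gbinomial[symmetric])
  then show ?thesis
    by (simp add: prod_list_diag_prod binomial_mat_def binomial_gbinomial[symmetric])
qed

lemma vandermonde_prod_of_nat: "vandermonde_prod n (of_nat :: nat \<Rightarrow> 'a::field_char_0) = superfact n"
  using det_binomial_mat[of n "of_nat :: nat \<Rightarrow> 'a"]
  by (simp add: det_binomial_mat_of_nat superfact_def)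

lemma det_binomial_mat_leibniz:
  "det (binomial_mat n x) = (\<Sum>p | p permutes {0..<n}. signof p * (\<Prod>i<n. x i gchoose p i))"
  unfolding det_def'[OF binomial_mat_carrier]
  by (rule sum.cong[OF refl])
    (auto simp: binomial_mat_def atLeast0LessThan intro!: prod.cong dest: permutes_in_image)

lemma sum_gbinomial_int_interval:
  fixes a b :: int
  assumes "a \<le> b"
  shows "(\<Sum>k\<in>{a..<b}. (of_int k :: 'a::field_char_0) gchoose j)
    = (of_int b gchoose Suc j) - (of_int a gchoose Suc j)"
proof -
  obtain d where b: "b = a + int d"
    using assms zle_iff_zadd by blast
  have "(\<Sum>k\<in>{a..<a + int d}. (of_int k :: 'a) gchoose j)
      = (of_int (a + int d) gchoose Suc j) - (of_int a gchoose Suc j)"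
  proof (induction d)
    case (Suc d)
    have "{a..<a + int (Suc d)} = insert (a + int d) {a..<a + int d}"
      by auto
    moreover have "(of_int (a + int (Suc d)) :: 'a) gchoose Suc j
        = (of_int (a + int d) gchoose j) + (of_int (a + int d) gchoose Suc j)"
      using gbinomial_Suc_Suc[of "of_int (a + int d) :: 'a" j] by (simp add: ac_simps)
    ultimately show ?case
      using Suc by simp
  qed simp
  then show ?thesis
    using b by simp
qed

lemma det_binomial_mat_row_differences:
  fixes x :: "nat \<Rightarrow> 'a::field_char_0"
  shows "det (mat n n (\<lambda>(i, j). (x (Suc i) gchoose Suc j) - (x i gchoose Suc j)))
    = det (binomial_mat (Suc n) x)"
proof -
  define A where "A = binomial_mat (Suc n) x"
  \<comment> \<open>subtracting from each row its predecessor leaves \<open>(1, 0, \<dots>, 0)\<close> in column \<open>0\<close>\<close>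
  define E :: "'a mat" where "E = mat (Suc n) (Suc n) (\<lambda>(i, j).
    (if j = i then 1 else 0) - (if Suc j = i then 1 else 0))"
  define C :: "'a mat" where "C = mat (Suc n) (Suc n) (\<lambda>(i, j).
    if i = 0 then A $$ (0, j) else A $$ (i, j) - A $$ (i - 1, j))"
  have A: "A \<in> carrier_mat (Suc n) (Suc n)" and E: "E \<in> carrier_mat (Suc n) (Suc n)"
    and C: "C \<in> carrier_mat (Suc n) (Suc n)"
    by (simp_all add: A_def E_def C_def)
  have "det E = prod_list (diag_mat E)"
    by (rule det_lower_triangular[OF _ E]) (simp add: E_def)
  then have det_E: "det E = 1"
    by (simp add: prod_list_diag_prod E_def)
  have "E * A = C"
  proof (rule eq_matI)
    fix i j assume "i < dim_row C" "j < dim_col C"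
    then have i: "i < Suc n" and j: "j < Suc n" by (simp_all add: C_def)
    have "(E * A) $$ (i, j) = (\<Sum>k<Suc n. (if k = i then 1 else 0) * A $$ (k, j)) -
        (\<Sum>k<Suc n. (if Suc k = i then 1 else 0) * A $$ (k, j))"
      using i j A
      by (simp add: E_def scalar_prod_def atLeast0LessThan left_diff_distrib sum_subtractf
          del: sum.lessThan_Suc)
    also have "\<dots> = C $$ (i, j)"
      using i j by (cases i) (simp_all add: sum_delta_mult C_def del: sum.lessThan_Suc)
    finally show "(E * A) $$ (i, j) = C $$ (i, j)" .
  qed (simp_all add: A_def E_def C_def)
  then have "det A = det C"
    using det_mult[OF E A] det_E by simp
  also have "det C = det (mat_delete C 0 0)"
    by (rule det_unit_first_col[OF C]) (simp add: C_def A_def binomial_mat_def)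
  also have "mat_delete C 0 0 = mat n n (\<lambda>(i, j). (x (Suc i) gchoose Suc j) - (x i gchoose Suc j))"
    by (rule eq_matI) (auto simp: mat_delete_def C_def A_def binomial_mat_def)
  finally show ?thesis
    by (simp add: A_def)
qed

lemma sum_det_binomial_mat_interlacing:
  fixes x :: "nat \<Rightarrow> int"
  assumes mono: "\<And>i. i < n \<Longrightarrow> x i \<le> x (Suc i)"
  shows "(\<Sum>m\<in>PiE {..<n} (\<lambda>i. {x i..<x (Suc i)}). det (binomial_mat n (\<lambda>i. of_int (m i))))
    = (det (binomial_mat (Suc n) (\<lambda>i. of_int (x i))) :: 'a::field_char_0)"
proof -
  let ?I = "PiE {..<n} (\<lambda>i. {x i..<x (Suc i)})"
  have "(\<Sum>m\<in>?I. det (binomial_mat n (\<lambda>i. of_int (m i) :: 'a)))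
      = (\<Sum>p | p permutes {0..<n}. signof p * (\<Sum>m\<in>?I. \<Prod>i<n. of_int (m i) gchoose p i))"
    by (simp add: det_binomial_mat_leibniz sum_distrib_left sum.swap[of _ ?I])
  also have "\<dots> = (\<Sum>p | p permutes {0..<n}. signof p *
      (\<Prod>i<n. (of_int (x (Suc i)) gchoose Suc (p i)) - (of_int (x i) gchoose Suc (p i))))"
  proof (rule sum.cong[OF refl])
    fix p :: "nat \<Rightarrow> nat"
    have "(\<Sum>m\<in>?I. \<Prod>i<n. (of_int (m i) :: 'a) gchoose p i)
        = (\<Prod>i<n. \<Sum>k\<in>{x i..<x (Suc i)}. of_int k gchoose p i)"
      by (rule prod_sum_PiE[symmetric]) auto
    also have "\<dots> = (\<Prod>i<n. (of_int (x (Suc i)) gchoose Suc (p i)) - (of_int (x i) gchoose Suc (p i)))"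
      by (rule prod.cong[OF refl]) (simp add: sum_gbinomial_int_interval mono)
    finally show "(signof p :: 'a) * (\<Sum>m\<in>?I. \<Prod>i<n. of_int (m i) gchoose p i) = signof p *
        (\<Prod>i<n. (of_int (x (Suc i)) gchoose Suc (p i)) - (of_int (x i) gchoose Suc (p i)))"
      by simp
  qed
  also have "\<dots> = det (mat n n (\<lambda>(i, j).
      (of_int (x (Suc i)) gchoose Suc j) - ((of_int (x i) :: 'a) gchoose Suc j)))"
    by (subst det_def'[of _ n], simp, rule sum.cong[OF refl])
      (auto simp: atLeast0LessThan intro!: prod.cong dest: permutes_in_image)
  also have "\<dots> = det (binomial_mat (Suc n) (\<lambda>i. of_int (x i)))"
    by (rule det_binomial_mat_row_differences)
  finally show ?thesis .
qed

section \<open>The Weyl product and interlacing partitions\<close>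

definition weyl_dimension :: "nat \<Rightarrow> (nat \<Rightarrow> nat) \<Rightarrow> real" where
  "weyl_dimension T lam = (\<Prod>i\<in>{1..T}. \<Prod>j\<in>{i<..T}.
     (real (lam i) - real (lam j) + real j - real i) / (real j - real i))"

text \<open>
  The usual coordinates \<open>\<lambda>\<^sub>i + T - i\<close> of a partition, negated and shifted to start at index 0,
  so that they increase; \<open>\<mu>\<close> interlaces \<open>\<lambda>\<close> iff each coordinate of \<open>\<mu>\<close> lies in
  \<open>[shifted_part \<lambda> k, shifted_part \<lambda> (k + 1))\<close>.
\<close>

definition shifted_part :: "(nat \<Rightarrow> nat) \<Rightarrow> nat \<Rightarrow> int" where
  "shifted_part lam k = int k - int (lam (Suc k))"

lemma weyl_dimension_eq_det:
  "weyl_dimension T lam = det (binomial_mat T (\<lambda>k. of_int (shifted_part lam k)))"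
proof -
  let ?x = "\<lambda>k. real_of_int (shifted_part lam k)"
  have "weyl_dimension T lam = (\<Prod>i<T. \<Prod>j\<in>{Suc i..<T}. (?x j - ?x i) / (real j - real i))"
  proof -
    have "weyl_dimension T lam = (\<Prod>i<T. \<Prod>j\<in>{Suc i<..T}.
        (real (lam (Suc i)) - real (lam j) + real j - real (Suc i)) / (real j - real (Suc i)))"
      unfolding weyl_dimension_def image_Suc_lessThan[symmetric] by (simp add: prod.reindex)
    also have "\<dots> = (\<Prod>i<T. \<Prod>j\<in>{Suc i..<T}. (?x j - ?x i) / (real j - real i))"
    proof (rule prod.cong[OF refl])
      fix i
      have "{Suc i<..T} = Suc ` {Suc i..<T}"
        by (auto simp: image_Suc_atLeastLessThan)
      then show "(\<Prod>j\<in>{Suc i<..T}. (real (lam (Suc i)) - real (lam j) + real j - real (Suc i))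
          / (real j - real (Suc i))) = (\<Prod>j\<in>{Suc i..<T}. (?x j - ?x i) / (real j - real i))"
        by (simp only:) (subst prod.reindex, auto intro!: prod.cong simp: shifted_part_def algebra_simps)
    qed
    finally show ?thesis .
  qed
  also have "\<dots> = vandermonde_prod T ?x / vandermonde_prod T real"
    by (simp add: vandermonde_prod_def prod_dividef)
  finally show ?thesis
    by (simp add: det_binomial_mat vandermonde_prod_of_nat)
qed

definition interlacing :: "nat \<Rightarrow> (nat \<Rightarrow> nat) \<Rightarrow> (nat \<Rightarrow> nat) set" where
  "interlacing n lam = {mu. (\<forall>i. i \<notin> {1..n} \<longrightarrow> mu i = 0) \<and>
     (\<forall>i\<in>{1..n}. lam (Suc i) \<le> mu i \<and> mu i \<le> lam i)}"

lemma interlacing_bounds: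
  "mu \<in> interlacing n lam \<Longrightarrow> i \<in> {1..n} \<Longrightarrow> lam (Suc i) \<le> mu i \<and> mu i \<le> lam i"
  by (simp add: interlacing_def)

lemma interlacing_outside: "mu \<in> interlacing n lam \<Longrightarrow> i \<notin> {1..n} \<Longrightarrow> mu i = 0"
  by (simp add: interlacing_def)

lemma bij_betw_interlacing_shifted_parts:
  "bij_betw (\<lambda>mu. restrict (shifted_part mu) {..<n}) (interlacing n lam)
     (PiE {..<n} (\<lambda>k. {shifted_part lam k..<shifted_part lam (Suc k)}))"
proof -
  define g where "g m i = (if 1 \<le> i \<and> i \<le> n then nat (int i - 1 - m (i - 1)) else 0)"
    for m :: "nat \<Rightarrow> int" and i
  let ?P = "PiE {..<n} (\<lambda>k. {shifted_part lam k..<shifted_part lam (Suc k)})"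
  have "g m \<in> interlacing n lam" if m: "m \<in> ?P" for m
  proof -
    have "lam (Suc i) \<le> g m i \<and> g m i \<le> lam i" if "i \<in> {1..n}" for i
    proof -
      obtain k where k: "i = Suc k" "k < n"
        using \<open>i \<in> {1..n}\<close> by (cases i) auto
      then have "m k \<in> {shifted_part lam k..<shifted_part lam (Suc k)}"
        using PiE_mem[OF m] by simp
      then show ?thesis
        using k by (simp add: g_def shifted_part_def le_nat_iff nat_le_iff)
    qed
    then show ?thesis
      by (simp add: interlacing_def g_def)
  qed
  moreover have "restrict (shifted_part (g m)) {..<n} = m" if "m \<in> ?P" for m
    using that by (force simp: g_def shifted_part_def fun_eq_iff PiE_def extensional_def)
  moreover have "g (restrict (shifted_part mu) {..<n}) = mu" if "mu \<in> interlacing n lam" for mu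
    using that by (auto simp: interlacing_def g_def shifted_part_def fun_eq_iff)
  moreover have "restrict (shifted_part mu) {..<n} \<in> ?P" if "mu \<in> interlacing n lam" for mu
    using that by (force simp: interlacing_def shifted_part_def)
  ultimately show ?thesis
    by (intro bij_betw_byWitness[where f' = g]) blast+
qed

lemma finite_interlacing: "finite (interlacing n lam)"
  using bij_betw_finite[OF bij_betw_interlacing_shifted_parts] by (simp add: finite_PiE)

lemma weyl_dimension_branching:
  assumes dec: "\<And>i. 1 \<le> i \<Longrightarrow> i \<le> n \<Longrightarrow> lam (Suc i) \<le> lam i"
  shows "weyl_dimension (Suc n) lam = (\<Sum>mu\<in>interlacing n lam. weyl_dimension n mu)"
proof -
  have mono: "shifted_part lam k \<le> shifted_part lam (Suc k)" if "k < n" for k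
    using dec[of "Suc k"] that by (simp add: shifted_part_def)
  have "weyl_dimension (Suc n) lam = det (binomial_mat (Suc n) (\<lambda>k. of_int (shifted_part lam k)))"
    by (rule weyl_dimension_eq_det)
  also have "\<dots> = (\<Sum>m\<in>PiE {..<n} (\<lambda>k. {shifted_part lam k..<shifted_part lam (Suc k)}).
      det (binomial_mat n (\<lambda>i. of_int (m i))))"
    by (rule sum_det_binomial_mat_interlacing[symmetric]) (rule mono)
  also have "\<dots> = (\<Sum>mu\<in>interlacing n lam.
      det (binomial_mat n (\<lambda>i. of_int (restrict (shifted_part mu) {..<n} i))))"
    by (rule sum.reindex_bij_betw[OF bij_betw_interlacing_shifted_parts, symmetric])
  also have "\<dots> = (\<Sum>mu\<in>interlacing n lam. weyl_dimension n mu)"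
    by (rule sum.cong[OF refl]) (simp add: weyl_dimension_eq_det cong: binomial_mat_cong)
  finally show ?thesis .
qed

section \<open>The branching rule for semistandard tableaux\<close>

lemma finite_young_cells: "finite (young_cells T lam)"
proof -
  have "young_cells T lam = Sigma {1..T} (\<lambda>r. {1..lam r})"
    by (auto simp: young_cells_def)
  then show ?thesis
    by simp
qed

lemma finite_ssyt: "finite (ssyt T lam)"
proof -
  let ?restr = "\<lambda>tab. restrict (\<lambda>(r, c). tab r c) (young_cells T lam)"
  have "inj_on ?restr (ssyt T lam)"
  proof (rule inj_onI, rule ext, rule ext)
    fix t1 t2 r c assume t: "t1 \<in> ssyt T lam" "t2 \<in> ssyt T lam" and eq: "?restr t1 = ?restr t2"
    show "t1 r c = t2 r c"
    proof (cases "(r, c) \<in> young_cells T lam")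
      case True
      then show ?thesis
        using fun_cong[OF eq, of "(r, c)"] by simp
    next
      case False
      then show ?thesis
        using t by (simp add: ssyt_def)
    qed
  qed
  moreover have "?restr ` ssyt T lam \<subseteq> PiE (young_cells T lam) (\<lambda>_. {..T})"
    by (auto simp: ssyt_def)
  then have "finite (?restr ` ssyt T lam)"
    by (rule finite_subset) (simp add: finite_PiE finite_young_cells)
  ultimately show ?thesis
    using finite_imageD by blast
qed

lemma ssyt_0: "ssyt 0 lam = {\<lambda>r c. 0}"
  by (auto simp: ssyt_def young_cells_def)

lemma down_closed_eq_atLeastAtMost_card:
  assumes down: "\<And>c c'. 1 \<le> c' \<Longrightarrow> c' \<le> c \<Longrightarrow> c \<le> L \<Longrightarrow> Q c \<Longrightarrow> Q c'"
  shows "{c. 1 \<le> c \<and> c \<le> L \<and> Q c} = {1..card {c. 1 \<le> c \<and> c \<le> L \<and> Q c}}"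
    (is "?S = _")
proof (cases "?S = {}")
  case False
  have fin: "finite ?S"
    by (rule finite_subset[of _ "{1..L}"]) auto
  have "?S = {1..Max ?S}"
  proof
    show "?S \<subseteq> {1..Max ?S}"
      using Max_ge[OF fin] by auto
    have "1 \<le> Max ?S \<and> Max ?S \<le> L \<and> Q (Max ?S)"
      using Max_in[OF fin False] by blast
    then show "{1..Max ?S} \<subseteq> ?S"
      using down by auto
  qed
  then show ?thesis
    by (metis card_atLeastAtMost diff_Suc_1)
qed simp

corollary down_closed_iff_le_card:
  assumes "\<And>c c'. 1 \<le> c' \<Longrightarrow> c' \<le> c \<Longrightarrow> c \<le> L \<Longrightarrow> Q c \<Longrightarrow> Q c'" "1 \<le> c" "c \<le> L"
  shows "Q c \<longleftrightarrow> c \<le> card {c. 1 \<le> c \<and> c \<le> L \<and> Q c}"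
proof -
  have "{c. 1 \<le> c \<and> c \<le> L \<and> Q c} = {1..card {c. 1 \<le> c \<and> c \<le> L \<and> Q c}}"
    using assms(1) by (rule down_closed_eq_atLeastAtMost_card)
  then have "c \<in> {c. 1 \<le> c \<and> c \<le> L \<and> Q c} \<longleftrightarrow> c \<in> {1..card {c. 1 \<le> c \<and> c \<le> L \<and> Q c}}"
    by (rule arg_cong)
  then show ?thesis
    using assms(2,3) by simp
qed

context
  fixes T :: nat and lam :: "nat \<Rightarrow> nat" and tab :: "nat \<Rightarrow> nat \<Rightarrow> nat"
  assumes tab: "tab \<in> ssyt T lam"
begin

lemma ssyt_outside: "(r, c) \<notin> young_cells T lam \<Longrightarrow> tab r c = 0"
  using tab by (auto simp: ssyt_def)

lemma ssyt_range: "(r, c) \<in> young_cells T lam \<Longrightarrow> 1 \<le> tab r c \<and> tab r c \<le> T"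
  using tab by (auto simp: ssyt_def)

lemma ssyt_row:
  "(r, c) \<in> young_cells T lam \<Longrightarrow> (r, Suc c) \<in> young_cells T lam \<Longrightarrow> tab r c \<le> tab r (Suc c)"
  using tab by (auto simp: ssyt_def)

lemma ssyt_col:
  "(r, c) \<in> young_cells T lam \<Longrightarrow> (Suc r, c) \<in> young_cells T lam \<Longrightarrow> tab r c < tab (Suc r) c"
  using tab by (auto simp: ssyt_def)

lemma ssyt_row_mono:
  assumes "(r, c) \<in> young_cells T lam" "1 \<le> c'" "c' \<le> c"
  shows "tab r c' \<le> tab r c"
  by (rule lift_Suc_mono_le_ivl[of "{c'..<c}"])
    (use assms in \<open>auto intro!: ssyt_row simp: young_cells_def\<close>)

lemma ssyt_entry_ge_row:
  assumes dec: "\<And>i. 1 \<le> i \<Longrightarrow> Suc i \<le> T \<Longrightarrow> lam (Suc i) \<le> lam i"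
  shows "(r, c) \<in> young_cells T lam \<Longrightarrow> r \<le> tab r c"
proof (induction r)
  case (Suc r)
  show ?case
  proof (cases "r = 0")
    case False
    then have "(r, c) \<in> young_cells T lam"
      using Suc.prems dec[of r] by (auto simp: young_cells_def)
    then show ?thesis
      using Suc.IH ssyt_col[OF _ Suc.prems] by fastforce
  qed (use ssyt_range[OF Suc.prems] in simp)
qed simp

end

definition small_entries :: "nat \<Rightarrow> (nat \<Rightarrow> nat) \<Rightarrow> (nat \<Rightarrow> nat \<Rightarrow> nat) \<Rightarrow> nat \<Rightarrow> nat set" where
  "small_entries n lam tab i = {c. 1 \<le> c \<and> c \<le> lam i \<and> tab i c \<le> n}"

definition small_shape :: "nat \<Rightarrow> (nat \<Rightarrow> nat) \<Rightarrow> (nat \<Rightarrow> nat \<Rightarrow> nat) \<Rightarrow> nat \<Rightarrow> nat" where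
  "small_shape n lam tab i = (if i \<in> {1..n} then card (small_entries n lam tab i) else 0)"

definition small_part :: "nat \<Rightarrow> (nat \<Rightarrow> nat \<Rightarrow> nat) \<Rightarrow> nat \<Rightarrow> nat \<Rightarrow> nat" where
  "small_part n tab r c = (if r \<le> n \<and> tab r c \<le> n then tab r c else 0)"

definition extend_tableau ::
    "nat \<Rightarrow> (nat \<Rightarrow> nat) \<Rightarrow> (nat \<Rightarrow> nat) \<Rightarrow> (nat \<Rightarrow> nat \<Rightarrow> nat) \<Rightarrow> nat \<Rightarrow> nat \<Rightarrow> nat" where
  "extend_tableau n lam mu t r c =
     (if (r, c) \<in> young_cells (Suc n) lam then (if r \<le> n \<and> c \<le> mu r then t r c else Suc n) else 0)"

lemma small_entries_eq:
  assumes tab: "tab \<in> ssyt (Suc n) lam" and i: "i \<in> {1..n}"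
  shows "small_entries n lam tab i = {1..small_shape n lam tab i}"
proof -
  have "small_entries n lam tab i = {1..card (small_entries n lam tab i)}"
    unfolding small_entries_def
  proof (rule down_closed_eq_atLeastAtMost_card)
    fix c c' assume c': "1 \<le> c'" "c' \<le> c" and c: "c \<le> lam i" "tab i c \<le> n"
    have cell: "(i, c) \<in> young_cells (Suc n) lam"
      using i c c' by (simp add: young_cells_def)
    show "tab i c' \<le> n"
      using ssyt_row_mono[OF tab cell c'] c by simp
  qed
  moreover have "small_shape n lam tab i = card (small_entries n lam tab i)"
    using i by (simp add: small_shape_def)
  ultimately show ?thesis
    by metis
qed

lemma small_shape_interlacing:
  assumes dec: "\<And>i. 1 \<le> i \<Longrightarrow> i \<le> n \<Longrightarrow> lam (Suc i) \<le> lam i"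
    and tab: "tab \<in> ssyt (Suc n) lam"
  shows "small_shape n lam tab \<in> interlacing n lam"
proof -
  have "lam (Suc i) \<le> small_shape n lam tab i \<and> small_shape n lam tab i \<le> lam i" if i: "i \<in> {1..n}" for i
  proof
    have "small_entries n lam tab i \<subseteq> {1..lam i}"
      by (auto simp: small_entries_def)
    then have "{1..small_shape n lam tab i} \<subseteq> {1..lam i}"
      by (simp only: small_entries_eq[OF tab i])
    then have "card {1..small_shape n lam tab i} \<le> card {1..lam i}"
      by (rule card_mono[OF finite_atLeastAtMost])
    then show "small_shape n lam tab i \<le> lam i"
      by simp
    have "{1..lam (Suc i)} \<subseteq> small_entries n lam tab i"
    proof
      fix c assume c: "c \<in> {1..lam (Suc i)}"
      have c1: "(i, c) \<in> young_cells (Suc n) lam"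
        using c i dec[of i] by (auto simp: young_cells_def)
      have c2: "(Suc i, c) \<in> young_cells (Suc n) lam"
        using c i by (auto simp: young_cells_def)
      have "tab i c < tab (Suc i) c" "tab (Suc i) c \<le> Suc n"
        using ssyt_col[OF tab c1 c2] ssyt_range[OF tab c2] by auto
      then show "c \<in> small_entries n lam tab i"
        using c1 by (auto simp: small_entries_def young_cells_def)
    qed
    then have "{1..lam (Suc i)} \<subseteq> {1..small_shape n lam tab i}"
      by (simp only: small_entries_eq[OF tab i])
    then show "lam (Suc i) \<le> small_shape n lam tab i"
      by (cases "lam (Suc i)") auto
  qed
  then show ?thesis
    by (simp add: interlacing_def small_shape_def)
qed

lemma young_cells_small_shape:
  assumes tab: "tab \<in> ssyt (Suc n) lam"
  shows "(r, c) \<in> young_cells n (small_shape n lam tab) \<longleftrightarrow>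
    r \<le> n \<and> (r, c) \<in> young_cells (Suc n) lam \<and> tab r c \<le> n"
proof (cases "r \<in> {1..n}")
  case True
  have "c \<in> small_entries n lam tab r \<longleftrightarrow> 1 \<le> c \<and> c \<le> small_shape n lam tab r"
    using small_entries_eq[OF tab True] by simp
  then show ?thesis
    using True by (auto simp: young_cells_def small_entries_def)
qed (auto simp: young_cells_def)

lemma small_part_ssyt:
  assumes tab: "tab \<in> ssyt (Suc n) lam"
  shows "small_part n tab \<in> ssyt n (small_shape n lam tab)"
proof -
  note cells = young_cells_small_shape[OF tab]
  have "small_part n tab r c = 0" if "(r, c) \<notin> young_cells n (small_shape n lam tab)" for r c
  proof (cases "(r, c) \<in> young_cells (Suc n) lam")
    case True
    then show ?thesis
      using that cells by (auto simp: small_part_def)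
  qed (simp add: small_part_def ssyt_outside[OF tab])
  moreover have "1 \<le> small_part n tab r c \<and> small_part n tab r c \<le> n"
    if "(r, c) \<in> young_cells n (small_shape n lam tab)" for r c
    using that cells ssyt_range[OF tab] by (auto simp: small_part_def)
  moreover have "small_part n tab r c \<le> small_part n tab r (c + 1)"
    if "(r, c) \<in> young_cells n (small_shape n lam tab)"
      "(r, c + 1) \<in> young_cells n (small_shape n lam tab)" for r c
    using that cells ssyt_row[OF tab] by (auto simp: small_part_def)
  moreover have "small_part n tab r c < small_part n tab (r + 1) c"
    if "(r, c) \<in> young_cells n (small_shape n lam tab)"
      "(r + 1, c) \<in> young_cells n (small_shape n lam tab)" for r c
    using that cells ssyt_col[OF tab] by (auto simp: small_part_def)
  ultimately show ?thesis
    unfolding ssyt_def by blast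
qed

lemma extend_tableau_ssyt:
  assumes mu: "mu \<in> interlacing n lam" and t: "t \<in> ssyt n mu"
  shows "extend_tableau n lam mu t \<in> ssyt (Suc n) lam"
proof -
  let ?e = "extend_tableau n lam mu t"
  have inner: "(r, c) \<in> young_cells n mu"
    if "(r, c) \<in> young_cells (Suc n) lam" "r \<le> n" "c \<le> mu r" for r c
    using that by (simp add: young_cells_def)
  have out: "?e r c = 0" if "(r, c) \<notin> young_cells (Suc n) lam" for r c
    using that by (simp add: extend_tableau_def)
  have range: "1 \<le> ?e r c \<and> ?e r c \<le> Suc n" if "(r, c) \<in> young_cells (Suc n) lam" for r c
    using that inner ssyt_range[OF t] by (fastforce simp: extend_tableau_def)
  have row: "?e r c \<le> ?e r (c + 1)"
    if "(r, c) \<in> young_cells (Suc n) lam" "(r, c + 1) \<in> young_cells (Suc n) lam" for r c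
  proof (cases "r \<le> n \<and> c + 1 \<le> mu r")
    case True
    then show ?thesis
      using that inner ssyt_row[OF t] by (simp add: extend_tableau_def)
  next
    case False
    then show ?thesis
      using that range[of r c] by (auto simp: extend_tableau_def)
  qed
  have col: "?e r c < ?e (r + 1) c"
    if "(r, c) \<in> young_cells (Suc n) lam" "(r + 1, c) \<in> young_cells (Suc n) lam" for r c
  proof -
    have r: "1 \<le> r" "r \<le> n" and "c \<le> lam (Suc r)"
      using that by (auto simp: young_cells_def)
    then have "c \<le> mu r"
      using interlacing_bounds[OF mu, of r] by simp
    then have e: "?e r c = t r c" and cell: "(r, c) \<in> young_cells n mu"
      using that r inner by (auto simp: extend_tableau_def)
    show ?thesis
    proof (cases "r + 1 \<le> n \<and> c \<le> mu (r + 1)")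
      case True
      then show ?thesis
        using that e inner ssyt_col[OF t cell] by (simp add: extend_tableau_def)
    next
      case False
      then show ?thesis
        using that e ssyt_range[OF t cell] by (auto simp: extend_tableau_def)
    qed
  qed
  show ?thesis
    unfolding ssyt_def using out range row col by blast
qed

lemma extend_tableau_small_part:
  assumes dec: "\<And>i. 1 \<le> i \<Longrightarrow> i \<le> n \<Longrightarrow> lam (Suc i) \<le> lam i"
    and tab: "tab \<in> ssyt (Suc n) lam"
  shows "extend_tableau n lam (small_shape n lam tab) (small_part n tab) = tab"
proof (intro ext)
  fix r c
  show "extend_tableau n lam (small_shape n lam tab) (small_part n tab) r c = tab r c"
  proof (cases "(r, c) \<in> young_cells (Suc n) lam")
    case False
    then show ?thesis
      using ssyt_outside[OF tab False] by (simp add: extend_tableau_def)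
  next
    case cell: True
    have range: "1 \<le> tab r c" "tab r c \<le> Suc n"
      using ssyt_range[OF tab cell] by auto
    have small: "r \<le> n \<and> c \<le> small_shape n lam tab r \<longleftrightarrow> tab r c \<le> n"
    proof (cases "r \<le> n")
      case True
      then have "c \<le> small_shape n lam tab r \<longleftrightarrow> (r, c) \<in> young_cells n (small_shape n lam tab)"
        using cell by (auto simp: young_cells_def)
      then show ?thesis
        using young_cells_small_shape[OF tab, of r c] cell True by simp
    next
      case False
      then have "r = Suc n"
        using cell by (simp add: young_cells_def)
      moreover have "r \<le> tab r c"
        by (rule ssyt_entry_ge_row[OF tab _ cell]) (rule dec; simp)
      ultimately show ?thesis
        using False by simp
    qed
    show ?thesis
      using cell range small
      by (cases "tab r c \<le> n") (simp_all add: extend_tableau_def small_part_def)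
  qed
qed

lemma small_shape_extend_tableau:
  assumes mu: "mu \<in> interlacing n lam" and t: "t \<in> ssyt n mu"
  shows "small_shape n lam (extend_tableau n lam mu t) = mu"
proof
  fix i
  show "small_shape n lam (extend_tableau n lam mu t) i = mu i"
  proof (cases "i \<in> {1..n}")
    case True
    have "small_entries n lam (extend_tableau n lam mu t) i = {1..mu i}"
    proof (rule Set.set_eqI)
      fix c
      have "mu i \<le> lam i"
        using interlacing_bounds[OF mu True] by simp
      moreover have "t i c \<le> n" if "1 \<le> c" "c \<le> mu i"
        using ssyt_range[OF t, of i c] True that by (simp add: young_cells_def)
      ultimately show "c \<in> small_entries n lam (extend_tableau n lam mu t) i \<longleftrightarrow> c \<in> {1..mu i}"
        using True by (auto simp: small_entries_def extend_tableau_def young_cells_def)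
    qed
    then show ?thesis
      using True by (simp add: small_shape_def)
  next
    case False
    then show ?thesis
      using interlacing_outside[OF mu False] by (auto simp: small_shape_def)
  qed
qed

lemma small_part_extend_tableau:
  assumes mu: "mu \<in> interlacing n lam" and t: "t \<in> ssyt n mu"
  shows "small_part n (extend_tableau n lam mu t) = t"
proof (intro ext)
  fix r c
  show "small_part n (extend_tableau n lam mu t) r c = t r c"
  proof (cases "(r, c) \<in> young_cells n mu")
    case True
    then have "(r, c) \<in> young_cells (Suc n) lam" "r \<le> n" "c \<le> mu r"
      using interlacing_bounds[OF mu, of r] by (auto simp: young_cells_def)
    then show ?thesis
      using ssyt_range[OF t True] by (simp add: small_part_def extend_tableau_def)
  next
    case False
    then show ?thesis
      using ssyt_outside[OF t False] by (auto simp: small_part_def extend_tableau_def young_cells_def)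
  qed
qed

lemma card_ssyt_Suc:
  assumes dec: "\<And>i. 1 \<le> i \<Longrightarrow> i \<le> n \<Longrightarrow> lam (Suc i) \<le> lam i"
  shows "card (ssyt (Suc n) lam) = (\<Sum>mu\<in>interlacing n lam. card (ssyt n mu))"
proof -
  have "bij_betw (\<lambda>tab. (small_shape n lam tab, small_part n tab))
      (ssyt (Suc n) lam) (Sigma (interlacing n lam) (ssyt n))"
    by (rule bij_betw_byWitness[where f' = "\<lambda>(mu, t). extend_tableau n lam mu t"])
      (auto simp: extend_tableau_small_part[where n = n and lam = lam, OF dec] small_shape_extend_tableau
        small_part_extend_tableau small_shape_interlacing[where n = n and lam = lam, OF dec] small_part_ssyt extend_tableau_ssyt)
  then have "card (ssyt (Suc n) lam) = card (Sigma (interlacing n lam) (ssyt n))"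
    by (rule bij_betw_same_card)
  also have "\<dots> = (\<Sum>mu\<in>interlacing n lam. card (ssyt n mu))"
    by (rule card_SigmaI) (simp_all add: finite_interlacing finite_ssyt)
  finally show ?thesis .
qed


theorem card_ssyt_eq_weyl_dimension:
  assumes "\<And>i. 1 \<le> i \<Longrightarrow> Suc i \<le> T \<Longrightarrow> lam (Suc i) \<le> lam i"
  shows "real (card (ssyt T lam)) = weyl_dimension T lam"
  using assms
proof (induction T arbitrary: lam)
  case 0
  then show ?case
    by (simp add: ssyt_0 weyl_dimension_def)
next
  case (Suc n)
  have dec: "\<And>i. 1 \<le> i \<Longrightarrow> i \<le> n \<Longrightarrow> lam (Suc i) \<le> lam i"
    using Suc.prems by simp
  have "real (card (ssyt (Suc n) lam)) = (\<Sum>mu\<in>interlacing n lam. real (card (ssyt n mu)))"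
    using card_ssyt_Suc[where n = n and lam = lam, OF dec] by simp
  also have "\<dots> = (\<Sum>mu\<in>interlacing n lam. weyl_dimension n mu)"
  proof (rule sum.cong[OF refl])
    fix mu assume mu: "mu \<in> interlacing n lam"
    have "mu (Suc i) \<le> mu i" if "1 \<le> i" "Suc i \<le> n" for i
      using interlacing_bounds[OF mu, of i] interlacing_bounds[OF mu, of "Suc i"] that by simp
    then show "real (card (ssyt n mu)) = weyl_dimension n mu"
      by (rule Suc.IH)
  qed
  also have "\<dots> = weyl_dimension (Suc n) lam"
    using weyl_dimension_branching[where n = n and lam = lam, OF dec] by simp
  finally show ?case .
qed

section \<open>Vicious walks and semistandard tableaux\<close>

definition count_le :: "nat \<Rightarrow> (nat \<Rightarrow> nat) \<Rightarrow> nat \<Rightarrow> nat" where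
  "count_le L h t = card {r. 1 \<le> r \<and> r \<le> L \<and> h r \<le> t}"

definition first_reach :: "(nat \<Rightarrow> nat) \<Rightarrow> nat \<Rightarrow> nat" where
  "first_reach f r = (LEAST t. r \<le> f t)"

definition unit_steps :: "nat \<Rightarrow> (nat \<Rightarrow> nat) \<Rightarrow> bool" where
  "unit_steps T f \<longleftrightarrow> f 0 = 0 \<and> (\<forall>t<T. f (Suc t) = f t \<or> f (Suc t) = Suc (f t))"

lemma count_le_cong:
  "(\<And>r. 1 \<le> r \<Longrightarrow> r \<le> L \<Longrightarrow> h r = h' r) \<Longrightarrow> count_le L h t = count_le L h' t"
  unfolding count_le_def by (rule arg_cong[where f = card]) auto

lemma count_le_le: "count_le L h t \<le> L"
proof -
  have "count_le L h t \<le> card {1..L}"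
    unfolding count_le_def by (rule card_mono) auto
  then show ?thesis
    by simp
qed

lemma count_le_mono: "t \<le> t' \<Longrightarrow> count_le L h t \<le> count_le L h t'"
  unfolding count_le_def by (rule card_mono) auto

context
  fixes L :: nat and h :: "nat \<Rightarrow> nat"
  assumes incr: "\<And>r. 1 \<le> r \<Longrightarrow> r < L \<Longrightarrow> h r < h (Suc r)"
begin

lemma le_count_le_iff:
  assumes "1 \<le> r" "r \<le> L"
  shows "h r \<le> t \<longleftrightarrow> r \<le> count_le L h t"
  unfolding count_le_def
proof (rule down_closed_iff_le_card[OF _ assms])
  fix c c' assume c: "1 \<le> c'" "c' \<le> c" "c \<le> L" "h c \<le> t"
  have "h c' \<le> h c"
    by (rule lift_Suc_mono_le_ivl[where N = "{c'..<c}" and f = h])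
      (use c incr in \<open>auto intro: less_imp_le\<close>)
  then show "h c' \<le> t"
    using c by simp
qed

lemma count_le_Suc: "count_le L h (Suc t) = count_le L h t \<or> count_le L h (Suc t) = Suc (count_le L h t)"
proof (rule ccontr)
  assume jump: "\<not> ?thesis"
  define r where "r = Suc (count_le L h t)"
  have r2: "Suc r \<le> count_le L h (Suc t)"
    using jump count_le_mono[of t "Suc t" L h] unfolding r_def by auto
  then have rL: "Suc r \<le> L"
    using count_le_le[of L h "Suc t"] by simp
  then have "h (Suc r) \<le> Suc t"
    using le_count_le_iff[of "Suc r" "Suc t"] r2 by simp
  moreover have "h r < h (Suc r)"
    using incr[of r] rL unfolding r_def by simp
  ultimately have "r \<le> count_le L h t"
    using le_count_le_iff[of r t] rL unfolding r_def by simp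
  then show False
    unfolding r_def by simp
qed

end

lemma unit_steps_mono:
  assumes f: "unit_steps T f" and "t \<le> t'" "t' \<le> T"
  shows "f t \<le> f t'"
proof (rule lift_Suc_mono_le_ivl[where N = "{..<T}" and f = f])
  fix n assume "n \<in> {..<T}"
  then have "f (Suc n) = f n \<or> f (Suc n) = Suc (f n)"
    using f unfolding unit_steps_def by blast
  then show "f n \<le> f (Suc n)"
    by auto
qed (use assms in auto)

context
  fixes T :: nat and f :: "nat \<Rightarrow> nat" and L :: nat
  assumes f: "unit_steps T f" and fT: "f T = L"
begin

lemma first_reach_le:
  "r \<le> L \<Longrightarrow> r \<le> f (first_reach f r) \<and> first_reach f r \<le> T"
  using LeastI[of "\<lambda>t. r \<le> f t" T] Least_le[of "\<lambda>t. r \<le> f t" T] fT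
  by (auto simp: first_reach_def)

lemma first_reach_le_iff:
  assumes "r \<le> L" "t \<le> T"
  shows "first_reach f r \<le> t \<longleftrightarrow> r \<le> f t"
proof
  assume "first_reach f r \<le> t"
  then have "f (first_reach f r) \<le> f t"
    using unit_steps_mono[OF f _ assms(2)] by blast
  then show "r \<le> f t"
    using first_reach_le[OF assms(1)] by simp
next
  assume "r \<le> f t"
  then show "first_reach f r \<le> t"
    unfolding first_reach_def by (rule Least_le)
qed

lemma first_reach_pos:
  assumes "1 \<le> r" "r \<le> L"
  shows "1 \<le> first_reach f r"
proof (rule ccontr)
  assume "\<not> 1 \<le> first_reach f r"
  then have "first_reach f r = 0"
    by simp
  then have "r \<le> f 0"
    using first_reach_le[OF assms(2)] by simp
  then show False
    using f assms(1) by (simp add: unit_steps_def)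
qed

lemma first_reach_less:
  assumes "1 \<le> r" "Suc r \<le> L"
  shows "first_reach f r < first_reach f (Suc r)"
proof -
  define t1 where "t1 = first_reach f (Suc r)"
  have t1: "Suc r \<le> f t1" "t1 \<le> T"
    using first_reach_le[OF assms(2)] unfolding t1_def by auto
  moreover have "1 \<le> t1"
    using first_reach_pos[of "Suc r"] assms unfolding t1_def by simp
  then obtain t0 where t0: "t1 = Suc t0"
    by (cases t1) auto
  moreover have "f t1 = f t0 \<or> f t1 = Suc (f t0)"
    using f t1(2) unfolding t0 by (simp add: unit_steps_def)
  ultimately have "r \<le> f t0"
    by auto
  then have "first_reach f r \<le> t0"
    unfolding first_reach_def by (rule Least_le)
  then show ?thesis
    unfolding t1_def[symmetric] t0 by simp
qed

lemma count_le_first_reach: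
  assumes "t \<le> T"
  shows "count_le L (first_reach f) t = f t"
proof -
  have "f t \<le> L"
    using unit_steps_mono[OF f assms order.refl] fT by simp
  then have "{r. 1 \<le> r \<and> r \<le> L \<and> first_reach f r \<le> t} = {1..f t}"
    using first_reach_le_iff[OF _ assms] by auto
  then show ?thesis
    by (simp add: count_le_def)
qed

end

definition counter_families :: "nat \<Rightarrow> nat \<Rightarrow> (nat \<Rightarrow> nat) \<Rightarrow> (nat \<Rightarrow> nat \<Rightarrow> nat) set" where
  "counter_families N T L = {f.
     (\<forall>c t. \<not> (1 \<le> c \<and> c \<le> N \<and> t \<le> T) \<longrightarrow> f c t = 0) \<and>
     (\<forall>c\<in>{1..N}. unit_steps T (f c) \<and> f c T = L c) \<and>
     (\<forall>c\<in>{1..<N}. \<forall>t\<le>T. f (Suc c) t \<le> f c t)}"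

text \<open>
  A walker starting at \<open>2 (c - 1)\<close> that has made \<open>f c t\<close> down-steps by time \<open>t\<close> is at
  \<open>2 (c - 1) + t - 2 f c t\<close>, so walkers \<open>c\<close> and \<open>c + 1\<close> stay strictly ordered iff
  \<open>f (c + 1) t \<le> f c t\<close>.
\<close>

definition down_steps :: "nat \<Rightarrow> nat \<Rightarrow> (nat \<Rightarrow> nat \<Rightarrow> int) \<Rightarrow> nat \<Rightarrow> nat \<Rightarrow> nat" where
  "down_steps N T S c t =
     (if 1 \<le> c \<and> c \<le> N \<and> t \<le> T then nat ((int t + 2 * (int c - 1) - S c t) div 2) else 0)"

definition walk_of_down_steps :: "nat \<Rightarrow> nat \<Rightarrow> (nat \<Rightarrow> nat \<Rightarrow> nat) \<Rightarrow> nat \<Rightarrow> nat \<Rightarrow> int" where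
  "walk_of_down_steps N T f c t =
     (if 1 \<le> c \<and> c \<le> N \<and> t \<le> T then 2 * (int c - 1) + int t - 2 * int (f c t) else 0)"

lemma vicious_walk_eq:
  assumes S: "S \<in> vicious_walks N T y" and c: "1 \<le> c" "c \<le> N" and t: "t \<le> T"
  shows "S c t = 2 * (int c - 1) + int t - 2 * int (down_steps N T S c t)"
proof -
  have steps: "\<forall>i\<in>{1..N}. \<forall>t\<in>{1..T}. \<bar>S i t - S i (t - 1)\<bar> = 1"
    using S by (simp add: vicious_walks_def)
  have step: "\<bar>S c (Suc t') - S c t'\<bar> = 1" if "t' < T" for t'
    using bspec[OF bspec[OF steps, of c], of "Suc t'"] c that by simp
  have "\<exists>k. S c t = 2 * (int c - 1) + int t - 2 * int k"
    using t
  proof (induction t)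
    case 0
    then show ?case
      using S c by (intro exI[of _ 0]) (simp add: vicious_walks_def)
  next
    case (Suc t)
    then obtain k where k: "S c t = 2 * (int c - 1) + int t - 2 * int k"
      by auto
    have "\<bar>S c (Suc t) - S c t\<bar> = 1"
      using step Suc.prems by simp
    then have "S c (Suc t) = S c t + 1 \<or> S c (Suc t) = S c t - 1"
      by auto
    then show ?case
    proof
      assume "S c (Suc t) = S c t + 1"
      then show ?case
        using k by (intro exI[of _ k]) simp
    next
      assume "S c (Suc t) = S c t - 1"
      then show ?case
        using k by (intro exI[of _ "Suc k"]) simp
    qed
  qed
  then obtain k where k: "S c t = 2 * (int c - 1) + int t - 2 * int k"
    by auto
  then have "down_steps N T S c t = k"
    using c t by (simp add: down_steps_def)
  then show ?thesis
    using k by simp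
qed

context
  fixes N T :: nat and L :: "nat \<Rightarrow> nat" and y :: "nat \<Rightarrow> int"
  assumes y: "\<And>j. 1 \<le> j \<Longrightarrow> j \<le> N \<Longrightarrow> y j = int T + 2 * (int j - 1) - 2 * int (L j)"
begin

lemma down_steps_counter_families:
  assumes S: "S \<in> vicious_walks N T y"
  shows "down_steps N T S \<in> counter_families N T L"
proof -
  have st: "\<And>c t. 1 \<le> c \<Longrightarrow> c \<le> N \<Longrightarrow> 1 \<le> t \<Longrightarrow> t \<le> T \<Longrightarrow> \<bar>S c t - S c (t - 1)\<bar> = 1"
    and s0: "\<And>c. 1 \<le> c \<Longrightarrow> c \<le> N \<Longrightarrow> S c 0 = 2 * (int c - 1)"
    and sT: "\<And>c. 1 \<le> c \<Longrightarrow> c \<le> N \<Longrightarrow> S c T = y c"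
    and ordered: "\<And>c t. 1 \<le> c \<Longrightarrow> c < N \<Longrightarrow> t \<le> T \<Longrightarrow> S c t < S (Suc c) t"
    using S unfolding vicious_walks_def by auto
  note eq = vicious_walk_eq[OF S]
  have "unit_steps T (down_steps N T S c) \<and> down_steps N T S c T = L c" if c: "1 \<le> c" "c \<le> N" for c
  proof -
    have "down_steps N T S c 0 = 0"
      using eq[OF c, of 0] s0[OF c] by simp
    moreover have "down_steps N T S c (Suc t) = down_steps N T S c t \<or>
        down_steps N T S c (Suc t) = Suc (down_steps N T S c t)" if t: "t < T" for t
    proof -
      have "\<bar>S c (Suc t) - S c t\<bar> = 1"
        using st[OF c, of "Suc t"] t by simp
      then show ?thesis
        using eq[OF c, of t] eq[OF c, of "Suc t"] t by auto
    qed
    moreover have "down_steps N T S c T = L c"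
      using eq[OF c, of T] sT[OF c] y[OF c] by simp
    ultimately show ?thesis
      by (simp add: unit_steps_def)
  qed
  moreover have "down_steps N T S (Suc c) t \<le> down_steps N T S c t"
    if c: "c \<in> {1..<N}" and t: "t \<le> T" for c t
  proof -
    have c1: "1 \<le> c" "c \<le> N" and c2: "1 \<le> Suc c" "Suc c \<le> N"
      using c by auto
    show ?thesis
      using ordered[of c t] c t eq[OF c1 t] eq[OF c2 t] by simp
  qed
  ultimately show ?thesis
    unfolding counter_families_def by (auto simp: down_steps_def)
qed

lemma walk_of_down_steps_vicious:
  assumes f: "f \<in> counter_families N T L"
  shows "walk_of_down_steps N T f \<in> vicious_walks N T y"
proof -
  have steps: "\<And>c. c \<in> {1..N} \<Longrightarrow> unit_steps T (f c)"
    and final: "\<And>c. c \<in> {1..N} \<Longrightarrow> f c T = L c"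
    and nested: "\<And>c t. c \<in> {1..<N} \<Longrightarrow> t \<le> T \<Longrightarrow> f (Suc c) t \<le> f c t"
    using f unfolding counter_families_def by auto
  show ?thesis
    unfolding vicious_walks_def
  proof (intro CollectI conjI allI impI ballI)
    fix i t assume i: "i \<in> {1..N}" and t: "t \<in> {1..T}"
    then obtain t0 where t0: "t = Suc t0"
      by (cases t) auto
    have "f i t = f i t0 \<or> f i t = Suc (f i t0)"
      using steps[OF i] t t0 by (auto simp: unit_steps_def)
    then show "\<bar>walk_of_down_steps N T f i t - walk_of_down_steps N T f i (t - 1)\<bar> = 1"
      using i t t0 by (auto simp: walk_of_down_steps_def)
  next
    fix i t assume "i \<in> {1..<N}" "t \<in> {0..T}"
    then show "walk_of_down_steps N T f i t < walk_of_down_steps N T f (i + 1) t"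
      using nested[of i t] by (auto simp: walk_of_down_steps_def)
  qed (use steps final y in \<open>auto simp: walk_of_down_steps_def unit_steps_def\<close>)
qed

lemma card_vicious_walks_eq_counter_families:
  "card (vicious_walks N T y) = card (counter_families N T L)"
proof (rule bij_betw_same_card[of "down_steps N T"], rule bij_betw_byWitness[where f' = "walk_of_down_steps N T"])
  show "\<forall>S\<in>vicious_walks N T y. walk_of_down_steps N T (down_steps N T S) = S"
  proof (intro ballI ext)
    fix S c t assume S: "S \<in> vicious_walks N T y"
    show "walk_of_down_steps N T (down_steps N T S) c t = S c t"
      using vicious_walk_eq[OF S, of c t] S by (auto simp: walk_of_down_steps_def vicious_walks_def)
  qed
  show "\<forall>f\<in>counter_families N T L. down_steps N T (walk_of_down_steps N T f) = f"
    by (auto simp: counter_families_def down_steps_def walk_of_down_steps_def fun_eq_iff)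
qed (use down_steps_counter_families walk_of_down_steps_vicious in auto)

end

definition column_counts ::
    "nat \<Rightarrow> nat \<Rightarrow> (nat \<Rightarrow> nat) \<Rightarrow> (nat \<Rightarrow> nat \<Rightarrow> nat) \<Rightarrow> nat \<Rightarrow> nat \<Rightarrow> nat" where
  "column_counts N T L tab c t =
     (if 1 \<le> c \<and> c \<le> N \<and> t \<le> T then count_le (L c) (\<lambda>r. tab r c) t else 0)"

definition tableau_of_counts :: "nat \<Rightarrow> (nat \<Rightarrow> nat) \<Rightarrow> (nat \<Rightarrow> nat \<Rightarrow> nat) \<Rightarrow> nat \<Rightarrow> nat \<Rightarrow> nat" where
  "tableau_of_counts T lam f r c = (if (r, c) \<in> young_cells T lam then first_reach (f c) r else 0)"

context
  fixes N T :: nat and L lam :: "nat \<Rightarrow> nat"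
  assumes L_dec: "\<And>i. 1 \<le> i \<Longrightarrow> Suc i \<le> N \<Longrightarrow> L (Suc i) \<le> L i"
    and L_le: "\<And>j. 1 \<le> j \<Longrightarrow> j \<le> N \<Longrightarrow> L j \<le> T"
    and lam: "\<And>r. lam r = card {j \<in> {1..N}. r \<le> L j}"
begin

lemma young_cells_conjugate:
  "(r, c) \<in> young_cells T lam \<longleftrightarrow> 1 \<le> c \<and> c \<le> N \<and> 1 \<le> r \<and> r \<le> L c"
proof -
  let ?S = "{j. 1 \<le> j \<and> j \<le> N \<and> r \<le> L j}"
  have "?S = {1..card ?S}"
  proof (rule down_closed_eq_atLeastAtMost_card)
    fix j j' assume j: "1 \<le> j'" "j' \<le> j" "j \<le> N" "r \<le> L j"
    have "L j \<le> L j'"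
      by (rule lift_Suc_antimono_le_ivl[where N = "{1..<N}" and f = L]) (use j L_dec in auto)
    then show "r \<le> L j'"
      using j by simp
  qed
  moreover have "lam r = card ?S"
    unfolding lam by (rule arg_cong[where f = card]) auto
  ultimately have "c \<le> lam r \<and> 1 \<le> c \<longleftrightarrow> c \<in> ?S"
    by (metis atLeastAtMost_iff)
  moreover have "r \<le> L c \<Longrightarrow> 1 \<le> c \<Longrightarrow> c \<le> N \<Longrightarrow> r \<le> T"
    using L_le[of c] by simp
  ultimately show ?thesis
    by (auto simp: young_cells_def)
qed

lemma ssyt_column_strict:
  assumes tab: "tab \<in> ssyt T lam" and c: "1 \<le> c" "c \<le> N"
  shows "\<And>r. 1 \<le> r \<Longrightarrow> r < L c \<Longrightarrow> tab r c < tab (Suc r) c"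
  using ssyt_col[OF tab] c by (simp add: young_cells_conjugate)

lemma column_counts_counter_families:
  assumes tab: "tab \<in> ssyt T lam"
  shows "column_counts N T L tab \<in> counter_families N T L"
proof -
  have "unit_steps T (column_counts N T L tab c) \<and> column_counts N T L tab c T = L c"
    if c: "1 \<le> c" "c \<le> N" for c
  proof -
    have range: "1 \<le> tab r c \<and> tab r c \<le> T" if "1 \<le> r" "r \<le> L c" for r
      using ssyt_range[OF tab] c that by (simp add: young_cells_conjugate)
    then have "{r. 1 \<le> r \<and> r \<le> L c \<and> tab r c \<le> 0} = {}"
      by fastforce
    moreover have "{r. 1 \<le> r \<and> r \<le> L c \<and> tab r c \<le> T} = {1..L c}"
      using range by fastforce
    ultimately show ?thesis
      using c count_le_Suc[where L = "L c" and h = "\<lambda>r. tab r c", OF ssyt_column_strict[OF tab c]]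
      by (simp add: unit_steps_def column_counts_def count_le_def)
  qed
  moreover have "column_counts N T L tab (Suc c) t \<le> column_counts N T L tab c t"
    if c: "c \<in> {1..<N}" and t: "t \<le> T" for c t
  proof -
    have "L (Suc c) \<le> L c"
      using L_dec c by simp
    moreover have "tab r c \<le> tab r (Suc c)" if "1 \<le> r" "r \<le> L (Suc c)" for r
      using ssyt_row[OF tab] c that \<open>L (Suc c) \<le> L c\<close> by (simp add: young_cells_conjugate)
    ultimately have "count_le (L (Suc c)) (\<lambda>r. tab r (Suc c)) t \<le> count_le (L c) (\<lambda>r. tab r c) t"
      unfolding count_le_def by (intro card_mono) (auto intro: order_trans)
    then show ?thesis
      using c t by (simp add: column_counts_def)
  qed
  ultimately show ?thesis
    by (auto simp: counter_families_def column_counts_def)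
qed

lemma tableau_of_counts_column_counts:
  assumes tab: "tab \<in> ssyt T lam"
  shows "tableau_of_counts T lam (column_counts N T L tab) = tab"
proof (intro ext)
  fix r c
  show "tableau_of_counts T lam (column_counts N T L tab) r c = tab r c"
  proof (cases "(r, c) \<in> young_cells T lam")
    case cell: True
    then have rc: "1 \<le> c" "c \<le> N" "1 \<le> r" "r \<le> L c"
      by (simp_all add: young_cells_conjugate)
    note iff = le_count_le_iff[where L = "L c" and h = "\<lambda>r. tab r c",
        OF ssyt_column_strict[OF tab rc(1,2)] rc(3,4)]
    have "first_reach (column_counts N T L tab c) r = tab r c"
      unfolding first_reach_def
    proof (rule Least_equality)
      show "r \<le> column_counts N T L tab c (tab r c)"
        using iff[of "tab r c"] ssyt_range[OF tab cell] rc by (simp add: column_counts_def)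
    next
      fix t assume "r \<le> column_counts N T L tab c t"
      then show "tab r c \<le> t"
        using iff[of t] rc by (simp add: column_counts_def split: if_splits)
    qed
    then show ?thesis
      using cell by (simp add: tableau_of_counts_def)
  qed (simp add: ssyt_outside[OF tab] tableau_of_counts_def)
qed

lemma tableau_of_counts_ssyt:
  assumes f: "f \<in> counter_families N T L"
  shows "tableau_of_counts T lam f \<in> ssyt T lam"
proof -
  let ?tab = "tableau_of_counts T lam f"
  have steps: "\<And>c. c \<in> {1..N} \<Longrightarrow> unit_steps T (f c)"
    and final: "\<And>c. c \<in> {1..N} \<Longrightarrow> f c T = L c"
    and nested: "\<And>c t. c \<in> {1..<N} \<Longrightarrow> t \<le> T \<Longrightarrow> f (Suc c) t \<le> f c t"
    using f unfolding counter_families_def by auto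
  have out: "?tab r c = 0" if "(r, c) \<notin> young_cells T lam" for r c
    using that by (simp add: tableau_of_counts_def)
  have range: "1 \<le> ?tab r c \<and> ?tab r c \<le> T" if "(r, c) \<in> young_cells T lam" for r c
  proof -
    have c: "c \<in> {1..N}" and r: "1 \<le> r" "r \<le> L c"
      using that by (simp_all add: young_cells_conjugate)
    show ?thesis
      using first_reach_pos[OF steps[OF c] final[OF c] r] first_reach_le[OF steps[OF c] final[OF c] r(2)]
        that by (simp add: tableau_of_counts_def)
  qed
  have row: "?tab r c \<le> ?tab r (c + 1)"
    if "(r, c) \<in> young_cells T lam" "(r, c + 1) \<in> young_cells T lam" for r c
  proof -
    have c: "c \<in> {1..<N}" and c': "Suc c \<in> {1..N}" and r: "r \<le> L (Suc c)"
      using that by (simp_all add: young_cells_conjugate)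
    define t0 where "t0 = first_reach (f (Suc c)) r"
    have t0: "r \<le> f (Suc c) t0" "t0 \<le> T"
      using first_reach_le[OF steps[OF c'] final[OF c'] r] unfolding t0_def by auto
    then have "r \<le> f c t0"
      using nested[OF c] by (meson le_trans)
    then have "first_reach (f c) r \<le> t0"
      unfolding first_reach_def by (rule Least_le)
    then show ?thesis
      using that by (simp add: tableau_of_counts_def t0_def)
  qed
  have col: "?tab r c < ?tab (r + 1) c"
    if "(r, c) \<in> young_cells T lam" "(r + 1, c) \<in> young_cells T lam" for r c
  proof -
    have c: "c \<in> {1..N}" and r: "1 \<le> r" "Suc r \<le> L c"
      using that by (simp_all add: young_cells_conjugate)
    show ?thesis
      using first_reach_less[OF steps[OF c] final[OF c] r] that by (simp add: tableau_of_counts_def)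
  qed
  show ?thesis
    unfolding ssyt_def using out range row col by blast
qed

lemma column_counts_tableau_of_counts:
  assumes f: "f \<in> counter_families N T L"
  shows "column_counts N T L (tableau_of_counts T lam f) = f"
proof (intro ext)
  fix c t
  show "column_counts N T L (tableau_of_counts T lam f) c t = f c t"
  proof (cases "1 \<le> c \<and> c \<le> N \<and> t \<le> T")
    case True
    then have c: "c \<in> {1..N}" and t: "t \<le> T"
      by simp_all
    have "count_le (L c) (\<lambda>r. tableau_of_counts T lam f r c) t = count_le (L c) (first_reach (f c)) t"
      by (rule count_le_cong) (use True in \<open>simp add: tableau_of_counts_def young_cells_conjugate\<close>)
    also have "\<dots> = f c t"
      using count_le_first_reach[of T "f c" "L c" t] f c t by (simp add: counter_families_def)
    finally show ?thesis
      using True by (simp add: column_counts_def)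
  qed (use f in \<open>auto simp: column_counts_def counter_families_def\<close>)
qed

lemma card_ssyt_eq_counter_families: "card (ssyt T lam) = card (counter_families N T L)"
  by (rule bij_betw_same_card[of "column_counts N T L"], rule bij_betw_byWitness[where f' = "tableau_of_counts T lam"])
    (use tableau_of_counts_column_counts column_counts_tableau_of_counts
      column_counts_counter_families tableau_of_counts_ssyt in auto)

end

theorem card_vicious_walks_eq_card_ssyt:
  fixes L :: "nat \<Rightarrow> nat"
  assumes "\<And>i. 1 \<le> i \<Longrightarrow> Suc i \<le> N \<Longrightarrow> L (Suc i) \<le> L i"
    and "\<And>j. 1 \<le> j \<Longrightarrow> j \<le> N \<Longrightarrow> L j \<le> T"
    and "\<And>j. 1 \<le> j \<Longrightarrow> j \<le> N \<Longrightarrow> y j = int T + 2 * (int j - 1) - 2 * int (L j)"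
    and "\<And>r. lam r = card {j \<in> {1..N}. r \<le> L j}"
  shows "card (vicious_walks N T y) = card (ssyt T lam)"
proof -
  have "card (vicious_walks N T y) = card (counter_families N T L)"
    using assms(3) by (rule card_vicious_walks_eq_counter_families)
  also have "\<dots> = card (ssyt T lam)"
    using assms(1,2,4) by (rule card_ssyt_eq_counter_families[symmetric])
  finally show ?thesis .
qed

section \<open>The specialisations at \<open>q = 1\<close>\<close>

lemma tendsto_schur_at_1:
  "((\<lambda>q::real. schur T lam (\<lambda>k. q ^ (k - 1))) \<longlongrightarrow> real (card (ssyt T lam))) (at 1)"
proof -
  have "((\<lambda>q::real. schur T lam (\<lambda>k. q ^ (k - 1))) \<longlongrightarrow> schur T lam (\<lambda>k. 1 ^ (k - 1))) (at 1)"
    unfolding schur_def by (intro tendsto_intros)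
  then show ?thesis
    by (simp add: schur_def)
qed

lemma tendsto_power_ratio_at_1:
  fixes a b :: nat
  assumes "0 < b"
  shows "((\<lambda>q::real. (q ^ a - 1) / (q ^ b - 1)) \<longlongrightarrow> real a / real b) (at 1)"
proof -
  have "((\<lambda>q::real. (\<Sum>k<a. q ^ k) / (\<Sum>k<b. q ^ k)) \<longlongrightarrow> (\<Sum>k<a. 1 ^ k) / (\<Sum>k<b. (1::real) ^ k)) (at 1)"
    by (intro tendsto_intros) (use assms in auto)
  moreover have "eventually (\<lambda>q::real. (\<Sum>k<a. q ^ k) / (\<Sum>k<b. q ^ k) = (q ^ a - 1) / (q ^ b - 1)) (at 1)"
    unfolding eventually_at_filter by (intro always_eventually) (simp add: power_diff_1_eq)
  ultimately show ?thesis
    using tendsto_cong by force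
qed

lemma tendsto_q_weyl_product_at_1:
  assumes "antimono lam"
  shows "((\<lambda>q::real. \<Prod>i\<in>{1..T}. \<Prod>j\<in>{i<..T}.
      (q powi (int (lam i) - int (lam j) + int j - int i) - 1) / (q powi (int j - int i) - 1))
    \<longlongrightarrow> weyl_dimension T lam) (at 1)"
  unfolding weyl_dimension_def
proof (intro tendsto_prod)
  fix i j assume ij: "i \<in> {1..T}" "j \<in> {i<..T}"
  define a where "a = lam i - lam j + j - i"
  define b where "b = j - i"
  have "lam j \<le> lam i"
    using assms ij by (simp add: antimono_def)
  then have a: "int (lam i) - int (lam j) + int j - int i = int a"
    and b: "int j - int i = int b" "0 < b"
    and ab: "(real (lam i) - real (lam j) + real j - real i) / (real j - real i) = real a / real b"
    using ij by (auto simp: a_def b_def of_nat_diff)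
  show "((\<lambda>q::real. (q powi (int (lam i) - int (lam j) + int j - int i) - 1) / (q powi (int j - int i) - 1))
      \<longlongrightarrow> (real (lam i) - real (lam j) + real j - real i) / (real j - real i)) (at 1)"
    unfolding a b(1) ab power_int_of_nat by (rule tendsto_power_ratio_at_1) (rule b(2))
qed

lemma parts_of_endpoints:
  fixes y L :: "nat \<Rightarrow> int"
  assumes y_incr: "\<forall>i\<in>{1..<N}. y i < y (i + 1)"
    and y_par: "\<forall>i\<in>{1..N}. y i mod 2 = int T mod 2"
    and L_def: "\<forall>i. L i = (int T + 2 * (int i - 1) - y i) div 2"
    and "int T \<ge> L 1" and "L N \<ge> 0"
  shows "\<And>j. j \<in> {1..N} \<Longrightarrow> y j = int T + 2 * (int j - 1) - 2 * L j"
    and "\<And>i. 1 \<le> i \<Longrightarrow> Suc i \<le> N \<Longrightarrow> L (Suc i) \<le> L i"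
    and "\<And>j. j \<in> {1..N} \<Longrightarrow> 0 \<le> L j \<and> L j \<le> int T"
proof -
  show y: "y j = int T + 2 * (int j - 1) - 2 * L j" if "j \<in> {1..N}" for j
  proof -
    have "y j mod 2 = int T mod 2"
      using y_par that by blast
    then show ?thesis
      using L_def[rule_format, of j] by presburger
  qed
  show dec: "L (Suc i) \<le> L i" if "1 \<le> i" "Suc i \<le> N" for i
  proof -
    have "y i < y (Suc i)" "y i mod 2 = y (Suc i) mod 2"
      using y_incr y_par that by auto
    then have "y i + 2 \<le> y (Suc i)"
      by presburger
    then show ?thesis
      using y[of i] y[of "Suc i"] that by simp
  qed
  show "0 \<le> L j \<and> L j \<le> int T" if "j \<in> {1..N}" for j
  proof -
    have mono: "L n' \<le> L n" if "1 \<le> n" "n \<le> n'" "n' \<le> N" for n n'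
      by (rule lift_Suc_antimono_le_ivl[where N = "{1..<N}" and f = L]) (use that dec in auto)
    have "L N \<le> L j" "L j \<le> L 1"
      using mono \<open>j \<in> {1..N}\<close> by auto
    then show ?thesis
      using assms(4,5) by simp
  qed
qed

theorem proposition3:
  fixes N T :: nat and y :: "nat \<Rightarrow> int" and L :: "nat \<Rightarrow> int" and lam :: "nat \<Rightarrow> nat"
  assumes "N \<ge> 1" and "T \<ge> 1"
    and y_incr: "\<forall>i\<in>{1..<N}. y i < y (i + 1)"
    and y_par: "\<forall>i\<in>{1..N}. y i mod 2 = int T mod 2"
    and L_def: "\<forall>i. L i = (int T + 2 * (int i - 1) - y i) div 2"
    and "int T \<ge> L 1" and "L N \<ge> 0"
    and lam_def: "\<forall>k. lam k = card {j \<in> {1..N}. L j \<ge> int k}"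
  shows "((\<lambda>q::real. schur T lam (\<lambda>k. q ^ (k - 1))) \<longlongrightarrow> real (M_count N T y)) (at 1)
    \<and> ((\<lambda>q::real. q ^ (\<Sum>k=1..T. (k - 1) * lam k) *
          (\<Prod>i\<in>{1..T}. \<Prod>j\<in>{i<..T}.
             (q powi (int (lam i) - int (lam j) + int j - int i) - 1) / (q powi (int j - int i) - 1)))
        \<longlongrightarrow> real (M_count N T y)) (at 1)
    \<and> real (M_count N T y) =
        (\<Prod>i\<in>{1..T}. \<Prod>j\<in>{i<..T}.
           (real (lam i) - real (lam j) + real j - real i) / (real j - real i))"
proof -
  note parts = parts_of_endpoints[OF y_incr y_par L_def assms(6,7)]
  define Lc where "Lc j = nat (L j)" for j
  have "lam r = card {j \<in> {1..N}. r \<le> Lc j}" for r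
  proof -
    have "{j \<in> {1..N}. L j \<ge> int r} = {j \<in> {1..N}. r \<le> Lc j}"
      using parts(3) by (force simp: Lc_def)
    then show ?thesis
      using lam_def by simp
  qed
  then have walks: "M_count N T y = card (ssyt T lam)"
    unfolding M_count_def
    by (intro card_vicious_walks_eq_card_ssyt[where L = Lc]) (use parts in \<open>auto simp: Lc_def nat_le_iff\<close>)
  have "antimono lam"
  proof (rule antimonoI)
    fix k k' :: nat assume "k \<le> k'"
    then show "lam k' \<le> lam k"
      unfolding lam_def[rule_format] by (intro card_mono) auto
  qed
  then have weyl: "real (card (ssyt T lam)) = weyl_dimension T lam"
    by (intro card_ssyt_eq_weyl_dimension) (simp add: antimono_def)
  have "((\<lambda>q::real. q ^ (\<Sum>k=1..T. (k - 1) * lam k) *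
          (\<Prod>i\<in>{1..T}. \<Prod>j\<in>{i<..T}.
             (q powi (int (lam i) - int (lam j) + int j - int i) - 1) / (q powi (int j - int i) - 1)))
        \<longlongrightarrow> 1 ^ (\<Sum>k=1..T. (k - 1) * lam k) * weyl_dimension T lam) (at 1)"
    by (intro tendsto_mult tendsto_power tendsto_ident_at tendsto_q_weyl_product_at_1 \<open>antimono lam\<close>)
  then show ?thesis
    using tendsto_schur_at_1[of T lam] walks weyl by (simp add: weyl_dimension_def)
qed

end
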